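(* Let $\mathbf{x}_1,\ldots,\mathbf{x}_n\in\mathbb{R}^p$ be distinct design points with observed responses $\mathbf{y}=(y_1,\ldots,y_n)^\top$. Let $\boldsymbol{\theta}=(\theta_1,\ldots,\theta_p)$ and $\boldsymbol{\alpha}=(\alpha_1,\ldots,\alpha_p)$ be correlation parameters with $0\le\theta_j$ and $\alpha_j>0$, and define the Gaussian correlation functions $g(\mathbf{h})=\exp(-\sum_{j=1}^p\theta_j h_j^2)$ and $l(\mathbf{h})=\exp(-\sum_{j=1}^p\alpha_j h_j^2)$. Let $\mathbf{G}$ and $\mathbf{L}$ be the $n\times n$ matrices with $(i,j)$ entries $g(\mathbf{x}_i-\mathbf{x}_j)$ and $l(\mathbf{x}_i-\mathbf{x}_j)$, and for $\mathbf{x}\in\mathbb{R}^p$ let $\mathbf{g}(\mathbf{x})=(g(\mathbf{x}-\mathbf{x}_1),\ldots,g(\mathbf{x}-\mathbf{x}_n))^\top$ and $\mathbf{l}(\mathbf{x})=(l(\mathbf{x}-\mathbf{x}_1),\ldots,l(\mathbf{x}-\mathbf{x}_n))^\top$. Let $v:\mathbb{R}^p\to(0,\infty)$ be a given function, $\boldsymbol{\Sigma}=\operatorname{diag}\{v(\mathbf{x}_1),\ldots,v(\mathbf{x}_n)\}$, $\lambda\in[0,1]$, $\mathbf{Q}=\mathbf{G}+\lambda\boldsymbol{\Sigma}^{1/2}\mathbf{L}\boldsymbol{\Sigma}^{1/2}$, $\mathbf{1}$ the all-ones vector in $\mathbb{R}^n$, and $\hat\mu=(\mathbf{1}^\top\mathbf{Q}^{-1}\mathbf{1})^{-1}\mathbf{1}^\top\mathbf{Q}^{-1}\mathbf{y}$.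 Define the single-stage predictor $$\hat y(\mathbf{x})=\hat\mu+\big(\mathbf{g}(\mathbf{x})+\lambda v^{1/2}(\mathbf{x})\boldsymbol{\Sigma}^{1/2}\mathbf{l}(\mathbf{x})\big)^\top\mathbf{Q}^{-1}(\mathbf{y}-\hat\mu\mathbf{1}).$$ Define the global trend $\hat y_{\mathrm{global}}(\mathbf{x})=\hat\mu+\mathbf{g}^\top(\mathbf{x})\mathbf{Q}^{-1}(\mathbf{y}-\hat\mu\mathbf{1})$, the residual vector $\mathbf{s}=\mathbf{y}-(\hat y_{\mathrm{global}}(\mathbf{x}_1),\ldots,\hat y_{\mathrm{global}}(\mathbf{x}_n))^\top$, the standardized residuals $\mathbf{s}^\ast=\boldsymbol{\Sigma}^{-1/2}\mathbf{s}$, and the sequential predictor $$\hat y_{\mathrm{seq}}(\mathbf{x})=\hat y_{\mathrm{global}}(\mathbf{x})+v^{1/2}(\mathbf{x})\,\mathbf{l}^\top(\mathbf{x})\mathbf{L}^{-1}\mathbf{s}^\ast.$$ Then $\hat y(\mathbf{x})=\hat y_{\mathrm{seq}}(\mathbf{x})$ for all $\mathbf{x}\in\mathbb{R}^p$.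
   Context: This is the composite Gaussian process (CGP) predictor with both parameters (the same $\lambda,\boldsymbol{\theta},\boldsymbol{\alpha}$ and volatility function $v$) used in both predictors. Since the design points are distinct, $\mathbf{G}$ and $\mathbf{L}$ are symmetric positive (semi)definite correlation matrices, with $\mathbf{L}$ and $\mathbf{Q}$ invertible, so all inverses above are well defined. $\boldsymbol{\Sigma}^{1/2}$ denotes the diagonal matrix of square roots of the diagonal of $\boldsymbol{\Sigma}$. *)

theory Defs
  imports "HOL-Analysis.Analysis"
begin

definition gauss_corr :: "real^'p \<Rightarrow> real^'p \<Rightarrow> real" where
  "gauss_corr th h = exp (- (\<Sum>j\<in>UNIV. th$j * (h$j)^2))"

definition corr_mat :: "real^'p \<Rightarrow> ('n::finite \<Rightarrow> real^'p) \<Rightarrow> real^'n^'n" where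
  "corr_mat th X = (\<chi> i j. gauss_corr th (X i - X j))"

definition corr_vec :: "real^'p \<Rightarrow> ('n::finite \<Rightarrow> real^'p) \<Rightarrow> real^'p \<Rightarrow> real^'n" where
  "corr_vec th X x = (\<chi> i. gauss_corr th (x - X i))"

definition sigma_half :: "(real^'p \<Rightarrow> real) \<Rightarrow> ('n::finite \<Rightarrow> real^'p) \<Rightarrow> real^'n^'n" where
  "sigma_half v X = (\<chi> i j. if i = j then sqrt (v (X i)) else 0)"

definition Q_mat :: "real^'p \<Rightarrow> real^'p \<Rightarrow> (real^'p \<Rightarrow> real) \<Rightarrow> real \<Rightarrow> ('n::finite \<Rightarrow> real^'p) \<Rightarrow> real^'n^'n" where
  "Q_mat th al v lam X =
     corr_mat th X + lam *\<^sub>R (sigma_half v X ** corr_mat al X ** sigma_half v X)"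

definition mu_hat :: "real^'p \<Rightarrow> real^'p \<Rightarrow> (real^'p \<Rightarrow> real) \<Rightarrow> real \<Rightarrow> ('n::finite \<Rightarrow> real^'p) \<Rightarrow> real^'n \<Rightarrow> real" where
  "mu_hat th al v lam X y =
     (let Qi = matrix_inv (Q_mat th al v lam X); one = (vec 1 :: real^'n)
      in inverse (one \<bullet> (Qi *v one)) * (one \<bullet> (Qi *v y)))"

definition y_hat :: "real^'p \<Rightarrow> real^'p \<Rightarrow> (real^'p \<Rightarrow> real) \<Rightarrow> real \<Rightarrow> ('n::finite \<Rightarrow> real^'p) \<Rightarrow> real^'n \<Rightarrow> real^'p \<Rightarrow> real" where
  "y_hat th al v lam X y x =
     (let mu = mu_hat th al v lam X y; Qi = matrix_inv (Q_mat th al v lam X)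
      in mu + (corr_vec th X x + (lam * sqrt (v x)) *\<^sub>R (sigma_half v X *v corr_vec al X x))
              \<bullet> (Qi *v (y - mu *\<^sub>R vec 1)))"

definition y_global :: "real^'p \<Rightarrow> real^'p \<Rightarrow> (real^'p \<Rightarrow> real) \<Rightarrow> real \<Rightarrow> ('n::finite \<Rightarrow> real^'p) \<Rightarrow> real^'n \<Rightarrow> real^'p \<Rightarrow> real" where
  "y_global th al v lam X y x =
     (let mu = mu_hat th al v lam X y; Qi = matrix_inv (Q_mat th al v lam X)
      in mu + corr_vec th X x \<bullet> (Qi *v (y - mu *\<^sub>R vec 1)))"

definition resid :: "real^'p \<Rightarrow> real^'p \<Rightarrow> (real^'p \<Rightarrow> real) \<Rightarrow> real \<Rightarrow> ('n::finite \<Rightarrow> real^'p) \<Rightarrow> real^'n \<Rightarrow> real^'n" where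
  "resid th al v lam X y = y - (\<chi> i. y_global th al v lam X y (X i))"

definition std_resid :: "real^'p \<Rightarrow> real^'p \<Rightarrow> (real^'p \<Rightarrow> real) \<Rightarrow> real \<Rightarrow> ('n::finite \<Rightarrow> real^'p) \<Rightarrow> real^'n \<Rightarrow> real^'n" where
  "std_resid th al v lam X y = matrix_inv (sigma_half v X) *v resid th al v lam X y"

definition y_seq :: "real^'p \<Rightarrow> real^'p \<Rightarrow> (real^'p \<Rightarrow> real) \<Rightarrow> real \<Rightarrow> ('n::finite \<Rightarrow> real^'p) \<Rightarrow> real^'n \<Rightarrow> real^'p \<Rightarrow> real" where
  "y_seq th al v lam X y x =
     y_global th al v lam X y x
     + sqrt (v x) * (corr_vec al X x \<bullet> (matrix_inv (corr_mat al X) *v std_resid th al v lam X y))"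

end

theory Submission
  imports Defs
begin

text \<open>Write \<open>w = Q^-1 (y - \<mu> 1)\<close> and \<open>S = \<Sigma>^(1/2)\<close>. Since \<open>Q = G + \<lambda> S L S\<close>,
  the global trend at the design points is \<open>\<mu> 1 + G w = y - \<lambda> S L S w\<close>, so the
  residuals are \<open>s = \<lambda> S L S w\<close> and \<open>L^-1 S^-1 s = \<lambda> S w\<close>. The sequential correction
  \<open>v(x)^(1/2) l(x)\<bullet>(\<lambda> S w)\<close> is then exactly the extra term of the single-stage
  predictor, because the diagonal matrix \<open>S\<close> is symmetric.\<close>

lemma matrix_inv_mult:
  fixes A :: "'a::comm_semiring_1^'n^'n"
  assumes "invertible A"
  shows matrix_inv_mult_right: "A ** matrix_inv A = mat 1"
    and matrix_inv_mult_left: "matrix_inv A ** A = mat 1"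
  using someI_ex[OF assms[unfolded invertible_def]] unfolding matrix_inv_def by auto

lemma matrix_inv_mult_vec_cancel:
  fixes A :: "'a::comm_semiring_1^'n^'n"
  assumes "invertible A"
  shows "matrix_inv A *v (A *v z) = z"
    and "A *v (matrix_inv A *v z) = z"
  by (simp_all add: matrix_vector_mul_assoc matrix_inv_mult[OF assms])

lemma sigma_half_mult_vec: "sigma_half v X *v z = (\<chi> i. sqrt (v (X i)) * z$i)"
  unfolding sigma_half_def matrix_vector_mult_def
  by (simp add: vec_eq_iff if_distrib[of "\<lambda>a. a * _"] sum.delta cong: if_cong)

lemma inner_sigma_half_commute:
  "(sigma_half v X *v a) \<bullet> b = a \<bullet> (sigma_half v X *v b)"
  unfolding sigma_half_mult_vec inner_vec_def by (simp add: mult_ac)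

lemma invertible_sigma_half:
  fixes X :: "'n::finite \<Rightarrow> real^'p"
  assumes "\<forall>x. 0 < v x"
  shows "invertible (sigma_half v X)"
proof -
  have "det (sigma_half v X) = (\<Prod>i\<in>UNIV. sqrt (v (X i)))"
    by (subst det_diagonal) (simp_all add: sigma_half_def)
  also have "\<dots> \<noteq> 0"
    using assms by (simp add: prod_zero_iff less_imp_neq[symmetric])
  finally show ?thesis
    by (simp add: invertible_det_nz)
qed

definition cgp_weights :: "real^'p \<Rightarrow> real^'p \<Rightarrow> (real^'p \<Rightarrow> real) \<Rightarrow> real \<Rightarrow> ('n::finite \<Rightarrow> real^'p) \<Rightarrow> real^'n \<Rightarrow> real^'n" where
  "cgp_weights th al v lam X y =
     matrix_inv (Q_mat th al v lam X) *v (y - mu_hat th al v lam X y *\<^sub>R vec 1)"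

lemma y_hat_eq_cgp_weights:
  "y_hat th al v lam X y x = mu_hat th al v lam X y
     + (corr_vec th X x + (lam * sqrt (v x)) *\<^sub>R (sigma_half v X *v corr_vec al X x))
       \<bullet> cgp_weights th al v lam X y"
  unfolding y_hat_def cgp_weights_def Let_def ..

lemma y_global_eq_cgp_weights:
  "y_global th al v lam X y x = mu_hat th al v lam X y
     + corr_vec th X x \<bullet> cgp_weights th al v lam X y"
  unfolding y_global_def cgp_weights_def Let_def ..

lemma y_global_at_design:
  "(\<chi> i. y_global th al v lam X y (X i))
     = mu_hat th al v lam X y *\<^sub>R vec 1 + corr_mat th X *v cgp_weights th al v lam X y"
  by (simp add: y_global_eq_cgp_weights vec_eq_iff corr_mat_def corr_vec_def
      inner_vec_def matrix_vector_mult_def)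

lemma Q_mat_mult_vec:
  "Q_mat th al v lam X *v w
     = corr_mat th X *v w + lam *\<^sub>R (sigma_half v X *v (corr_mat al X *v (sigma_half v X *v w)))"
  unfolding Q_mat_def
  by (simp add: matrix_vector_mult_add_rdistrib scaleR_matrix_vector_assoc[symmetric]
      matrix_vector_mul_assoc matrix_mul_assoc)

lemma resid_eq_cgp_weights:
  assumes "invertible (Q_mat th al v lam X)"
  shows "resid th al v lam X y
     = lam *\<^sub>R (sigma_half v X *v (corr_mat al X *v (sigma_half v X *v cgp_weights th al v lam X y)))"
proof -
  have "Q_mat th al v lam X *v cgp_weights th al v lam X y = y - mu_hat th al v lam X y *\<^sub>R vec 1"
    unfolding cgp_weights_def by (rule matrix_inv_mult_vec_cancel(2)[OF assms])
  then show ?thesis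
    unfolding resid_def y_global_at_design Q_mat_mult_vec by (simp add: algebra_simps)
qed

lemma corr_mat_inv_std_resid:
  assumes "\<forall>x. 0 < v x"
    and "invertible (corr_mat al X)"
    and "invertible (Q_mat th al v lam X)"
  shows "matrix_inv (corr_mat al X) *v std_resid th al v lam X y
     = lam *\<^sub>R (sigma_half v X *v cgp_weights th al v lam X y)"
  unfolding std_resid_def resid_eq_cgp_weights[OF assms(3)]
  by (simp add: matrix_vector_mult_scaleR matrix_inv_mult_vec_cancel(1)
      invertible_sigma_half[OF assms(1)] assms(2))

theorem theorem1:
  fixes X :: "'n::finite \<Rightarrow> real^'p"
    and y :: "real^'n"
    and th al :: "real^'p"
    and v :: "real^'p \<Rightarrow> real"
    and lam :: real
  assumes distinct: "inj X"
    and th_nonneg: "\<forall>j. 0 \<le> th$j"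
    and al_pos: "\<forall>j. 0 < al$j"
    and v_pos: "\<forall>x. 0 < v x"
    and lam_ge: "0 \<le> lam" and lam_le: "lam \<le> 1"
    and L_inv: "invertible (corr_mat al X)"
    and Q_inv: "invertible (Q_mat th al v lam X)"
  shows "\<forall>x. y_hat th al v lam X y x = y_seq th al v lam X y x"
  unfolding y_seq_def y_hat_eq_cgp_weights y_global_eq_cgp_weights
    corr_mat_inv_std_resid[OF v_pos L_inv Q_inv]
  by (simp add: inner_add_left inner_sigma_half_commute)

end
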